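(* Let $\mathcal H$ be a complex Hilbert space of finite dimension $n$, and let $\mathbf A=(A_1,\dots,A_m)$ be an $m$-tuple of self-adjoint operators on $\mathcal H$ such that $\{A_1,\dots,A_m\}$ is linearly independent. Assume $\mathbf 0\in\Lambda_{n-1}(\mathbf A)$, i.e., there is an orthonormal basis of $\mathcal H$ in which every $A_j$ has matrix of the form $\begin{pmatrix} * & * \\ * & 0_{n-1}\end{pmatrix}$. (a) If $m=2n-1$, then there is an invertible $S\in M_m(\mathbb R)$ such that $$\Lambda_1(\mathbf A)=\Big\{(1+u_1,u_2,\dots,u_m)S:\ u_1,\dots,u_m\in\mathbb R,\ \sum_{j=1}^m u_j^2=1\Big\},$$ so that $\Lambda_1(\mathbf A)$ is not star-shaped. (b) If $m<2n-1$, then $\Lambda_1(\mathbf A)$ is star-shaped with $\mathbf 0$ as a star center.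
   Context: For an $m$-tuple $\mathbf A=(A_1,\dots,A_m)$ of self-adjoint operators on a complex Hilbert space $\mathcal H$ and a positive integer $k$, $\Lambda_k(\mathbf A)=\{(a_1,\dots,a_m)\in\mathbb R^m:$ there is an orthogonal projection $P$ of rank $k$ with $PA_jP=a_jP$ for all $j\}$; in particular $\Lambda_1(\mathbf A)=\{(\langle A_1x,x\rangle,\dots,\langle A_mx,x\rangle): x\in\mathcal H,\ \|x\|=1\}$ is the joint numerical range. A set $S\subseteq\mathbb R^m$ is star-shaped with star center $\mathbf c\in S$ if for every $\mathbf b\in S$ the segment joining $\mathbf c$ and $\mathbf b$ lies in $S$. Row vectors in $\mathbb R^m$ are multiplied on the right by $m\times m$ matrices. *)

theory Defs
  imports "HOL-Analysis.Analysis"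
begin

(* The n-dimensional complex Hilbert space is modelled as complex^'n (standard inner
   product), operators as complex n x n matrices complex^'n^'n. *)

definition hermitian :: "complex^'n^'n \<Rightarrow> bool" where
  "hermitian A \<longleftrightarrow> (\<forall>i j. A $ i $ j = cnj (A $ j $ i))"

definition orth_proj :: "complex^'n^'n \<Rightarrow> bool" where
  "orth_proj P \<longleftrightarrow> hermitian P \<and> P ** P = P"

definition higher_rank_nr :: "nat \<Rightarrow> ('m \<Rightarrow> complex^'n^'n) \<Rightarrow> (real^'m) set" where
  "higher_rank_nr k A = {a. \<exists>P. orth_proj P \<and> rank P = k \<and>
        (\<forall>j. P ** A j ** P = (a $ j) *\<^sub>R P)}"

(* real linear independence of the family A_1,...,A_m (as m distinct elements) *)
definition lin_indep_tuple :: "('m::finite \<Rightarrow> 'b::real_vector) \<Rightarrow> bool" where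
  "lin_indep_tuple A \<longleftrightarrow> (\<forall>c. (\<Sum>j\<in>UNIV. c j *\<^sub>R A j) = 0 \<longrightarrow> (\<forall>j. c j = 0))"

definition star_center :: "'a::real_vector set \<Rightarrow> 'a \<Rightarrow> bool" where
  "star_center S c \<longleftrightarrow> c \<in> S \<and> (\<forall>b\<in>S. closed_segment c b \<subseteq> S)"

end

theory Submission
  imports Defs
begin

(* The rank n-1 projection P with P A_j P = 0 is I - q q^* for a unit vector q, so every A_j maps
   q\<^sup>\<bottom> into \<complex>q.  Writing a unit vector as x = a q + y with y \<bottom> q gives
   <A_j x, x> = |a|^2 <A_j q, q> + 2 Re <A_j (a^* y), q>, so \<Lambda>_1(A) is the image under a linear map G
   of the coordinates (|a|^2, a^* y); these sweep out exactly the sphere about (1/2, 0) through 0 in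
   the real (2n-1)-dimensional space D = \<real> \<times> q\<^sup>\<bottom>.
   If m < 2n-1, G has a kernel direction in D, along which every point of the ball can be pushed
   onto the sphere: \<Lambda>_1(A) is the image of the ball, hence convex.
   If m = 2n-1, every A_j is H(d_j) for a linear map H on D, so by a dimension count the independent
   A_j span H(D); as the j-th coordinate of G d pairs d with H(d_j), and pairing d = (t, w) with H(d)
   gives t^2 + 2|w|^2, G is injective.  The injective image of a sphere has no star centre: the
   midpoint of the images of two antipodal points is the image of the centre. *)

section \<open>General linear geometry\<close>

lemma linear_kernel_nontrivial_on_subspace:
  fixes G :: "'a::euclidean_space \<Rightarrow> 'b::euclidean_space"
  assumes G: "linear G" and D: "subspace D" and dim: "DIM('b) < dim D"
  obtains k where "k \<in> D" "k \<noteq> 0" "G k = 0"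
proof -
  have "\<not> inj_on G D"
  proof
    assume "inj_on G D"
    then have "dim (G ` D) = dim D"
      using dim_image_eq[OF G, of D] D by (metis span_eq_iff)
    moreover have "dim (G ` D) \<le> DIM('b)"
      by (rule dim_subset_UNIV)
    ultimately show False
      using dim by simp
  qed
  then show ?thesis
    using linear_inj_on_iff_eq_0[OF G D] that by blast
qed

text \<open>Along a kernel direction of \<open>G\<close> every point of the ball reaches the sphere without
  changing its image.\<close>

lemma linear_image_sphere_eq_cball:
  fixes G :: "'a::real_normed_vector \<Rightarrow> 'b::real_vector"
  assumes G: "linear G" and D: "subspace D"
    and k: "k \<in> D" "k \<noteq> 0" "G k = 0"
  shows "G ` (D \<inter> sphere c r) = G ` (D \<inter> cball c r)"
proof
  show "G ` (D \<inter> cball c r) \<subseteq> G ` (D \<inter> sphere c r)"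
  proof clarify
    fix p assume p: "p \<in> D" "p \<in> cball c r"
    define h where "h l = dist c (p + l *\<^sub>R k)" for l
    define L where "L = 2 * r / norm k"
    have r: "0 \<le> r"
      using p(2) dist_not_less_zero[of c p] by (simp del: dist_not_less_zero)
    have "h 0 \<le> r"
      using p(2) by (simp add: h_def)
    moreover have "r \<le> h L"
    proof -
      have "2 * r = dist p (p + L *\<^sub>R k)"
        using k(2) r by (simp add: L_def dist_norm)
      also have "\<dots> \<le> dist p c + h L"
        unfolding h_def by (rule dist_triangle)
      finally show ?thesis
        using p(2) by (simp add: dist_commute)
    qed
    moreover have "continuous_on {0..L} h"
      unfolding h_def by (intro continuous_intros)
    ultimately obtain l where "h l = r"
      using IVT'[of h 0 r L] r k(2) by (auto simp: L_def)
    moreover have "p + l *\<^sub>R k \<in> D"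
      using D p(1) k(1) by (simp add: subspace_add subspace_scale)
    moreover have "G (p + l *\<^sub>R k) = G p"
      using k(3) by (simp add: linear_add[OF G] linear_scale[OF G])
    ultimately show "G p \<in> G ` (D \<inter> sphere c r)"
      by (metis IntI h_def image_eqI mem_sphere)
  qed
qed auto

lemma convex_linear_image_sphere:
  fixes G :: "'a::real_normed_vector \<Rightarrow> 'b::real_vector"
  assumes "linear G" "subspace D" "k \<in> D" "k \<noteq> 0" "G k = 0"
  shows "convex (G ` (D \<inter> sphere c r))"
  unfolding linear_image_sphere_eq_cball[OF assms]
  by (intro convex_linear_image convex_Int subspace_imp_convex assms convex_cball)

lemma not_starlike_linear_image_sphere:
  fixes G :: "'a::real_normed_vector \<Rightarrow> 'b::real_vector"
  assumes G: "linear G" "inj_on G D" and D: "subspace D" "c \<in> D" and r: "0 < r"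
  shows "\<not> starlike (G ` (D \<inter> sphere c r))"
proof
  let ?W = "G ` (D \<inter> sphere c r)"
  assume "starlike ?W"
  then obtain p where p: "p \<in> D \<inter> sphere c r"
    and star: "\<And>x. x \<in> ?W \<Longrightarrow> closed_segment (G p) x \<subseteq> ?W"
    unfolding starlike_def by blast
  define p' where "p' = 2 *\<^sub>R c - p"
  have "dist c p' = dist p c"
    by (simp add: p'_def dist_norm scaleR_2 algebra_simps)
  then have "p' \<in> D \<inter> sphere c r"
    using p D by (simp add: p'_def subspace_diff subspace_scale dist_commute)
  then have "midpoint (G p) (G p') \<in> ?W"
    using star midpoint_in_closed_segment by blast
  moreover have "midpoint (G p) (G p') = G c"
    by (simp add: midpoint_def p'_def linear_diff[OF G(1)] linear_scale[OF G(1)] algebra_simps)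
  ultimately obtain e where "e \<in> D \<inter> sphere c r" "G c = G e"
    by auto
  then show False
    using inj_onD[OF G(2)] D(2) r by fastforce
qed

lemma isometry_onto_subspace:
  fixes D :: "'a::euclidean_space set" and j0 :: "'m::finite"
  assumes D: "subspace D" "dim D = CARD('m)" and u: "u \<in> D" "norm u = 1"
  obtains f :: "real^'m \<Rightarrow> 'a"
  where "linear f" "range f = D" "\<And>x. norm (f x) = norm x" "f (axis j0 1) = u"
proof -
  have dim: "dim (UNIV :: (real^'m) set) = dim D"
    using D(2) by simp
  obtain f :: "real^'m \<Rightarrow> 'a" and g where f: "linear f" "range f = D" "\<And>x. norm (f x) = norm x"
    and g: "\<And>x. x \<in> D \<Longrightarrow> norm (g x) = norm x" "\<And>x. x \<in> D \<Longrightarrow> f (g x) = x"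
  proof (rule isometries_subspaces[OF subspace_UNIV D(1) dim])
    fix f :: "real^'m \<Rightarrow> 'a" and g
    assume "linear f" "range f = D" "\<And>x. x \<in> UNIV \<Longrightarrow> norm (f x) = norm x"
      "\<And>x. x \<in> D \<Longrightarrow> norm (g x) = norm x" "\<And>x. x \<in> D \<Longrightarrow> f (g x) = x"
    then show thesis
      using that[of f g] by simp
  qed
  have "norm (axis j0 (1::real)) = norm (g u)"
    using g(1) u by simp
  then obtain R :: "real^'m \<Rightarrow> real^'m"
    where R: "orthogonal_transformation R" "R (axis j0 1) = g u"
    using orthogonal_transformation_exists by blast
  show ?thesis
  proof (rule that)
    show "linear (f \<circ> R)"
      by (rule linear_compose[OF orthogonal_transformation_linear[OF R(1)] f(1)])
    show "range (f \<circ> R) = D"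
      unfolding image_comp[symmetric] using f(2) orthogonal_transformation_surj[OF R(1)] by simp
    show "norm ((f \<circ> R) x) = norm x" for x
      using orthogonal_transformation_norm[OF R(1)] f(3) by simp
    show "(f \<circ> R) (axis j0 1) = u"
      using R(2) g(2) u(1) by simp
  qed
qed

lemma scaled_isometry_onto_subspace:
  fixes D :: "'a::euclidean_space set" and j0 :: "'m::finite"
  assumes D: "subspace D" "dim D = CARD('m)" and c: "c \<in> D" "c \<noteq> 0"
  obtains F :: "real^'m \<Rightarrow> 'a"
  where "linear F" "range F = D" "\<And>x. norm (F x) = norm c * norm x" "F (axis j0 1) = c"
proof -
  obtain f :: "real^'m \<Rightarrow> 'a" where f: "linear f" "range f = D" "\<And>x. norm (f x) = norm x"
    "f (axis j0 1) = c /\<^sub>R norm c"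
    using isometry_onto_subspace[OF D, of "c /\<^sub>R norm c"] D(1) c by (auto simp: subspace_scale)
  show ?thesis
  proof (rule that)
    show "linear ((*\<^sub>R) (norm c) \<circ> f)"
      by (intro linear_compose f(1) linear_scale_self)
    show "range ((*\<^sub>R) (norm c) \<circ> f) = D"
    proof
      show "range ((*\<^sub>R) (norm c) \<circ> f) \<subseteq> D"
        using f(2) D(1) by (auto simp: subspace_scale)
      show "D \<subseteq> range ((*\<^sub>R) (norm c) \<circ> f)"
      proof
        fix p assume "p \<in> D"
        then obtain x where "f x = p /\<^sub>R norm c"
          using f(2) D(1) by (metis rangeE subspace_scale)
        then have "((*\<^sub>R) (norm c) \<circ> f) x = p"
          using c(2) by simp
        then show "p \<in> range ((*\<^sub>R) (norm c) \<circ> f)"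
          by (metis rangeI)
      qed
    qed
    show "norm (((*\<^sub>R) (norm c) \<circ> f) x) = norm c * norm x" for x
      using f(3) by simp
    show "((*\<^sub>R) (norm c) \<circ> f) (axis j0 1) = c"
      using f(4) c(2) by simp
  qed
qed

lemma linear_inj_vector_matrix_mult:
  fixes L :: "real^'m \<Rightarrow> real^'m"
  assumes L: "linear L" "inj L"
  obtains S where "invertible S" "\<And>x. L x = x v* S"
proof
  have "(*v) (matrix L) = L"
    using matrix_vector_mul(2)[OF L(1)] by simp
  then have "invertible (matrix L)"
    using L(2) by (simp add: invertible_left_inverse matrix_left_invertible_injective)
  then show "invertible (transpose (matrix L))"
    by (simp add: transpose_invertible)
  show "L x = x v* transpose (matrix L)" for x
    using L(1) by (simp add: matrix_works)
qed

lemma image_sphere_eq_translate: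
  fixes a :: "'a::real_normed_vector"
  shows "h ` sphere a 1 = {h (a + u) | u. norm u = 1}"
proof -
  have "sphere a 1 = (+) a ` sphere 0 1"
    using sphere_translation[of a 0 1] by simp
  then show ?thesis
    by auto
qed

lemma linear_image_sphere_normal_form:
  fixes G :: "'a::euclidean_space \<Rightarrow> real^'m" and j0 :: 'm
  assumes G: "linear G" "inj_on G D" and D: "subspace D" "dim D = CARD('m)"
    and c: "c \<in> D" "c \<noteq> 0"
  shows "\<exists>S::real^'m^'m. invertible S \<and>
           G ` (D \<inter> sphere c (norm c)) = {(axis j0 1 + u) v* S | u. norm u = 1}"
proof -
  obtain F :: "real^'m \<Rightarrow> 'a" where F: "linear F" "range F = D"
    and nF: "\<And>x. norm (F x) = norm c * norm x" and Fa: "F (axis j0 1) = c"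
    using scaled_isometry_onto_subspace[OF D c] by metis
  have "inj F"
    unfolding linear_inj_iff_eq_0[OF F(1)] using nF c(2) by (metis mult_eq_0_iff norm_eq_zero)
  then have "linear (G \<circ> F)" "inj (G \<circ> F)"
    using F G by (auto intro: linear_compose comp_inj_on)
  then obtain S :: "real^'m^'m" where S: "invertible S" "\<And>x. (G \<circ> F) x = x v* S"
    using linear_inj_vector_matrix_mult by blast
  have dist_F: "dist c (F x) = norm c * dist (axis j0 1) x" for x
    using nF[of "axis j0 1 - x"] by (simp add: dist_norm linear_diff[OF F(1)] Fa)
  have "F ` sphere (axis j0 1) 1 = D \<inter> sphere c (norm c)"
  proof (intro set_eqI iffI)
    fix p assume "p \<in> F ` sphere (axis j0 1) 1"
    then show "p \<in> D \<inter> sphere c (norm c)"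
      using F(2) dist_F by auto
  next
    fix p assume p: "p \<in> D \<inter> sphere c (norm c)"
    then obtain x where x: "p = F x"
      using F(2) by blast
    then have "dist (axis j0 1) x = 1"
      using p dist_F[of x] c(2) by simp
    then show "p \<in> F ` sphere (axis j0 1) 1"
      using x by auto
  qed
  moreover have "(\<lambda>x. x v* S) ` sphere (axis j0 1) 1 = G ` F ` sphere (axis j0 1) 1"
    using S(2) by (simp add: image_image)
  ultimately have "G ` (D \<inter> sphere c (norm c)) = (\<lambda>x. x v* S) ` sphere (axis j0 1) 1"
    by simp
  then have "G ` (D \<inter> sphere c (norm c)) = {(axis j0 1 + u) v* S | u. norm u = 1}"
    by (simp only: image_sphere_eq_translate)
  with S(1) show ?thesis
    by blast
qed

lemma convex_star_center: "convex S \<Longrightarrow> c \<in> S \<Longrightarrow> star_center S c"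
  by (simp add: star_center_def closed_segment_subset)

lemma lin_indep_tuple_inj:
  assumes "lin_indep_tuple A"
  shows "inj A"
proof (rule injI)
  fix i k assume eq: "A i = A k"
  define c where "c j = (if j = i then 1 else 0) - (if j = k then 1 else (0::real))" for j
  have "(\<Sum>j\<in>UNIV. c j *\<^sub>R A j) = A i - A k"
    by (simp add: c_def scaleR_diff_left sum_subtractf if_distrib[of "\<lambda>t. t *\<^sub>R _"] cong: if_cong)
  then have "c i = 0"
    using assms eq unfolding lin_indep_tuple_def by simp
  then show "i = k"
    by (auto simp: c_def split: if_splits)
qed

lemma lin_indep_tuple_independent:
  assumes "lin_indep_tuple A"
  shows "independent (range A)"
proof
  assume "dependent (range A)"
  then obtain c v where s: "(\<Sum>v\<in>range A. c v *\<^sub>R v) = 0" and v: "v \<in> range A" "c v \<noteq> 0"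
    using dependent_finite[of "range A"] by auto
  have "(\<Sum>j\<in>UNIV. c (A j) *\<^sub>R A j) = 0"
    using s lin_indep_tuple_inj[OF assms] by (simp add: sum.reindex)
  then show False
    using assms v unfolding lin_indep_tuple_def by auto
qed

section \<open>The sesquilinear inner product on \<open>complex^'n\<close>\<close>

definition cinner :: "complex^'n \<Rightarrow> complex^'n \<Rightarrow> complex" where
  "cinner x y = (\<Sum>i\<in>UNIV. cnj (x$i) * y$i)"

lemma scaleR_eq_of_real_smult: "r *\<^sub>R y = of_real r *s (y::complex^'n)"
  by (simp add: vec_eq_iff scaleR_conv_of_real[where 'a=complex])

lemma cinner_add_left [simp]: "cinner (x + y) z = cinner x z + cinner y z"
  by (simp add: cinner_def distrib_right sum.distrib)

lemma cinner_add_right [simp]: "cinner x (y + z) = cinner x y + cinner x z"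
  by (simp add: cinner_def distrib_left sum.distrib)

lemma cinner_diff_left [simp]: "cinner (x - y) z = cinner x z - cinner y z"
  by (simp add: cinner_def left_diff_distrib sum_subtractf)

lemma cinner_diff_right [simp]: "cinner x (y - z) = cinner x y - cinner x z"
  by (simp add: cinner_def right_diff_distrib sum_subtractf)

lemma cinner_smult_left [simp]: "cinner (c *s x) y = cnj c * cinner x y"
  by (simp add: cinner_def sum_distrib_left algebra_simps)

lemma cinner_smult_right [simp]: "cinner x (c *s y) = c * cinner x y"
  by (simp add: cinner_def sum_distrib_left algebra_simps)

lemma cinner_scaleR_left [simp]: "cinner (r *\<^sub>R x) y = of_real r * cinner x y"
  by (simp add: scaleR_eq_of_real_smult)

lemma cinner_scaleR_right [simp]: "cinner x (r *\<^sub>R y) = of_real r * cinner x y"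
  by (simp add: scaleR_eq_of_real_smult)

lemma cinner_zero_right [simp]: "cinner x 0 = 0"
  by (simp add: cinner_def)

lemma cnj_cinner: "cnj (cinner x y) = cinner y x"
  by (simp add: cinner_def mult.commute)

lemma cinner_eq_0_commute: "cinner x y = 0 \<Longrightarrow> cinner y x = 0"
  by (metis cnj_cinner complex_cnj_zero)

lemma cinner_self: "cinner x x = of_real (norm x ^ 2)"
proof -
  have "cinner x x = (\<Sum>i\<in>UNIV. of_real (norm (x$i) ^ 2))"
    unfolding cinner_def
    by (rule sum.cong) (auto simp: complex_norm_square mult.commute simp flip: of_real_power)
  also have "\<dots> = of_real (norm x ^ 2)"
    by (simp add: norm_vec_def L2_set_def sum_nonneg)
  finally show ?thesis .
qed

lemma inner_eq_Re_cinner: "inner x y = Re (cinner x y)"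
  by (simp add: cinner_def inner_vec_def inner_complex_def)

lemma norm_smult: "norm (c *s (x::complex^'n)) = cmod c * norm x"
  by (simp add: norm_vec_def L2_set_right_distrib norm_mult)

lemma norm_smult_add_orthogonal:
  assumes "norm q = 1" "cinner q y = 0"
  shows "norm (c *s q + y) ^ 2 = cmod c ^ 2 + norm y ^ 2"
proof -
  have "of_real (norm (c *s q + y) ^ 2) = cinner (c *s q + y) (c *s q + y)"
    by (simp add: cinner_self)
  also have "\<dots> = cnj c * c * cinner q q + cinner y y"
    using assms(2) cinner_eq_0_commute[OF assms(2)] by simp
  also have "\<dots> = of_real (cmod c ^ 2 + norm y ^ 2)"
    using assms(1) complex_norm_square[of c] by (simp add: cinner_self mult.commute)
  finally show ?thesis
    using of_real_eq_iff by blast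
qed

lemma exists_unit_orthogonal:
  fixes q :: "complex^'n"
  assumes n: "2 \<le> CARD('n)" and q: "norm q = 1"
  obtains x where "norm x = 1" "cinner q x = 0"
proof -
  have "q \<noteq> 0"
    using q by auto
  then obtain i where i: "q$i \<noteq> 0"
    by (auto simp: vec_eq_iff)
  have "\<not> (\<forall>a b::'n. a = b)"
    using n card_le_Suc0_iff_eq[of "UNIV :: 'n set"] by auto
  then obtain k where k: "k \<noteq> i"
    by (metis (full_types))
  define v where "v = axis k 1 - cinner q (axis k 1) *s q"
  have qv: "cinner q v = 0"
    using q by (simp add: v_def cinner_self)
  have "v \<noteq> 0"
  proof
    assume v0: "v = 0"
    then have "(axis k 1 - cinner q (axis k 1) *s q) $ i = 0"
      unfolding v_def by simp
    then have "cinner q (axis k 1) * q$i = 0"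
      using k by (simp add: axis_def)
    then have "cinner q (axis k 1) = 0"
      using i by simp
    then show False
      using v0 unfolding v_def by (simp add: axis_eq_0_iff)
  qed
  then show ?thesis
    using that[of "v /\<^sub>R norm v"] qv by simp
qed

lemma hermitian_iff: "hermitian A \<longleftrightarrow> (\<forall>i j. cnj (A$i$j) = A$j$i)"
  unfolding hermitian_def by (metis complex_cnj_cnj)

lemma hermitian_cinner:
  assumes "hermitian A"
  shows "cinner (A *v x) y = cinner x (A *v y)"
proof -
  have "cinner (A *v x) y = (\<Sum>i\<in>UNIV. \<Sum>j\<in>UNIV. cnj (A$i$j) * cnj (x$j) * y$i)"
    by (simp add: cinner_def matrix_vector_mult_def sum_distrib_right)
  also have "\<dots> = (\<Sum>j\<in>UNIV. \<Sum>i\<in>UNIV. cnj (x$j) * (A$j$i * y$i))"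
    using assms by (subst sum.swap) (simp add: hermitian_iff mult_ac)
  also have "\<dots> = cinner x (A *v y)"
    by (simp add: cinner_def matrix_vector_mult_def sum_distrib_left)
  finally show ?thesis .
qed

lemma hermitian_cinner_real:
  assumes "hermitian A"
  shows "cinner x (A *v x) = of_real (Re (cinner x (A *v x)))"
proof -
  have "cnj (cinner x (A *v x)) = cinner x (A *v x)"
    by (simp add: cnj_cinner hermitian_cinner[OF assms])
  then show ?thesis
    by (metis Reals_cnj_iff complex_is_Real_iff of_real_Re)
qed

lemma matrix_vector_mult_scaleR_complex: "M *v (r *\<^sub>R z) = r *\<^sub>R (M *v (z::complex^'n))"
  by (simp add: scaleR_eq_of_real_smult vec.scale)

lemma scaleR_matrix_vector_mult_complex: "(r *\<^sub>R M) *v z = r *\<^sub>R (M *v (z::complex^'n))"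
  by (simp add: matrix_vector_mult_def vec_eq_iff scaleR_conv_of_real[where 'a=complex]
      sum_distrib_left mult_ac)

definition outer :: "complex^'n \<Rightarrow> complex^'n \<Rightarrow> complex^'n^'n" where
  "outer x y = (\<chi> i j. x$i * cnj (y$j))"

lemma outer_add_left: "outer (x + y) z = outer x z + outer y z"
  by (simp add: outer_def vec_eq_iff distrib_right)

lemma outer_add_right: "outer x (y + z) = outer x y + outer x z"
  by (simp add: outer_def vec_eq_iff distrib_left)

lemma outer_scaleR_left: "outer (r *\<^sub>R x) y = r *\<^sub>R outer x y"
  by (simp add: outer_def vec_eq_iff scaleR_conv_of_real[where 'a=complex])

lemma outer_scaleR_right: "outer x (r *\<^sub>R y) = r *\<^sub>R outer x y"
  by (simp add: outer_def vec_eq_iff scaleR_conv_of_real[where 'a=complex])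

lemma outer_mult_vector: "outer x y *v z = cinner y z *s x"
  by (simp add: outer_def cinner_def matrix_vector_mult_def vec_eq_iff sum_distrib_left mult_ac)

lemma orth_proj_outer:
  assumes "norm x = 1"
  shows "orth_proj (outer x x)"
proof -
  have "hermitian (outer x x)"
    by (simp add: hermitian_iff outer_def)
  moreover have "outer x x ** outer x x = outer x x"
    using assms unfolding matrix_eq
    by (simp add: matrix_vector_mul_assoc[symmetric] outer_mult_vector vec.scale cinner_self)
  ultimately show ?thesis
    by (simp add: orth_proj_def)
qed

lemma outer_compress:
  assumes "hermitian A"
  shows "outer x x ** A ** outer x x = Re (cinner x (A *v x)) *\<^sub>R outer x x"
  unfolding matrix_eq
proof
  fix z
  have "(outer x x ** A ** outer x x) *v z = (cinner x z * cinner x (A *v x)) *s x"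
    by (simp add: matrix_vector_mul_assoc[symmetric] outer_mult_vector vec.scale)
  also have "\<dots> = (Re (cinner x (A *v x)) *\<^sub>R outer x x) *v z"
    by (subst hermitian_cinner_real[OF assms])
       (simp add: scaleR_matrix_vector_mult_complex outer_mult_vector scaleR_eq_of_real_smult
         mult.commute)
  finally show "(outer x x ** A ** outer x x) *v z = (Re (cinner x (A *v x)) *\<^sub>R outer x x) *v z" .
qed

section \<open>Orthogonal projections of rank one and of corank one\<close>

text \<open>Ranks are dimensions of row spaces over \<open>\<complex>\<close>.  They are controlled through the bilinear
  pairing \<open>bdot\<close>: conjugates of vectors fixed by a hermitian matrix lie in its row space, kernel
  vectors are \<open>bdot\<close>-orthogonal to it, and \<open>bdot (vcnj x) y = cinner x y\<close>.\<close>

definition vcnj :: "complex^'n \<Rightarrow> complex^'n" where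
  "vcnj x = (\<chi> j. cnj (x$j))"

definition bdot :: "complex^'n \<Rightarrow> complex^'n \<Rightarrow> complex" where
  "bdot r x = (\<Sum>j\<in>UNIV. r$j * x$j)"

lemma bdot_vcnj [simp]: "bdot (vcnj u) x = cinner u x"
  by (simp add: bdot_def vcnj_def cinner_def)

lemma bdot_span_eq_0:
  assumes "s \<in> vec.span S" "\<And>r. r \<in> S \<Longrightarrow> bdot r v = 0"
  shows "bdot s v = 0"
proof -
  have "vec.subspace {r. bdot r v = 0}"
    unfolding vec.subspace_def bdot_def
    by (auto simp: distrib_right sum.distrib mult.assoc simp flip: sum_distrib_left)
  then show ?thesis
    using vec.span_induct[OF assms(1), of "\<lambda>r. bdot r v = 0"] assms(2) by auto
qed

lemma bdot_rows_eq_0: "M *v x = 0 \<Longrightarrow> r \<in> rows M \<Longrightarrow> bdot r x = 0"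
  by (auto simp: rows_def row_def bdot_def vec_eq_iff matrix_vector_mult_def)

lemma vcnj_in_span_rows:
  assumes "hermitian M" "M *v x = x"
  shows "vcnj x \<in> vec.span (rows M)"
proof -
  have "vcnj x = (\<Sum>k\<in>UNIV. cnj (x$k) *s row k M)"
    unfolding vec_eq_iff
  proof
    fix j
    have "vcnj x $ j = cnj ((M *v x) $ j)"
      using assms(2) by (simp add: vcnj_def)
    also have "\<dots> = (\<Sum>k\<in>UNIV. cnj (x$k) *s row k M) $ j"
      using assms(1) by (simp add: matrix_vector_mult_def hermitian_iff sum_component row_def mult.commute)
    finally show "vcnj x $ j = (\<Sum>k\<in>UNIV. cnj (x$k) *s row k M) $ j" .
  qed
  also have "\<dots> \<in> vec.span (rows M)"
    by (intro vec.span_sum vec.span_scale vec.span_base) (auto simp: rows_def)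
  finally show ?thesis .
qed

lemma independent_insert_vcnj:
  assumes "vec.independent B" "\<And>r. r \<in> B \<Longrightarrow> bdot r x = 0" "x \<noteq> 0"
  shows "vec.independent (insert (vcnj x) B)" "vcnj x \<notin> B"
proof -
  have "vcnj x \<notin> vec.span B"
  proof
    assume "vcnj x \<in> vec.span B"
    then have "cinner x x = 0"
      using bdot_span_eq_0 assms(2) by fastforce
    then show False
      using assms(3) by (simp add: cinner_self)
  qed
  then show "vec.independent (insert (vcnj x) B)" "vcnj x \<notin> B"
    using assms(1) vec.independent_insertI vec.span_base by auto
qed

lemma rank_outer:
  assumes "x \<noteq> 0"
  shows "rank (outer x x) = 1"
proof -
  have row: "row i (outer x x) = x$i *s vcnj x" for i
    by (simp add: row_def outer_def vcnj_def vec_eq_iff)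
  obtain i where i: "x$i \<noteq> 0"
    using assms by (auto simp: vec_eq_iff)
  then have r0: "row i (outer x x) \<noteq> 0"
    by (simp add: row vec_eq_iff vcnj_def) (metis mult_eq_0_iff complex_cnj_zero_iff)
  have "rows (outer x x) \<subseteq> vec.span {vcnj x}"
    by (auto simp: rows_def row vec.span_singleton)
  moreover have "vcnj x \<noteq> 0"
    using i by (auto simp: vcnj_def vec_eq_iff)
  ultimately have "vec.dim (rows (outer x x)) \<le> 1"
    using vec.dim_mono[of "rows (outer x x)" "{vcnj x}"] by simp
  moreover have "vec.dim {row i (outer x x)} \<le> vec.dim (rows (outer x x))"
    by (rule vec.dim_subset) (auto simp: rows_def)
  ultimately show ?thesis
    using r0 by (simp add: row_rank_def_gen)
qed

lemma rank_mat_1_complex: "rank (mat 1 :: complex^'n^'n) = CARD('n)"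
proof -
  have "hermitian (mat 1 :: complex^'n^'n)"
    by (simp add: hermitian_iff mat_def)
  then have "vec.span (rows (mat 1 :: complex^'n^'n)) = UNIV"
    using vcnj_in_span_rows[of "mat 1", where x="vcnj _"] by (auto simp: vcnj_def vec_eq_iff)
  then show ?thesis
    by (metis row_rank_def_gen vec.dim_span vec_dim_card)
qed

lemma orth_proj_complement:
  assumes "orth_proj P"
  shows "orth_proj (mat 1 - P)"
proof -
  have PP: "P *v (P *v x) = P *v x" for x
    using assms by (simp add: orth_proj_def matrix_vector_mul_assoc)
  have "(mat 1 - P) ** (mat 1 - P) = mat 1 - P"
    unfolding matrix_eq
    by (simp add: matrix_vector_mul_assoc[symmetric] matrix_vector_mult_diff_rdistrib
        matrix_vector_mult_diff_distrib PP)
  moreover have "hermitian (mat 1 - P)"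
    using assms by (auto simp: orth_proj_def hermitian_iff mat_def)
  ultimately show ?thesis
    by (simp add: orth_proj_def)
qed

lemma orth_proj_fixed_unit:
  assumes "orth_proj P" "P \<noteq> 0"
  obtains x where "norm x = 1" "P *v x = x"
proof -
  obtain z where z: "P *v z \<noteq> 0"
    using assms(2) matrix_eq[of P 0] by auto
  have "P *v (P *v z) = P *v z"
    using assms(1) by (simp add: orth_proj_def matrix_vector_mul_assoc)
  then show ?thesis
    using that[of "(1 / norm (P *v z)) *\<^sub>R (P *v z)"] z by (simp add: matrix_vector_mult_scaleR_complex)
qed

lemma orth_proj_fixed_orthogonal:
  assumes P: "orth_proj P" and x: "norm x = 1" "P *v x = x" and ne: "P \<noteq> outer x x"
  obtains y where "norm y = 1" "P *v y = y" "cinner x y = 0"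
proof -
  obtain z where z: "P *v z \<noteq> outer x x *v z"
    using ne matrix_eq[of P "outer x x"] by auto
  define v where "v = P *v z - cinner x z *s x"
  have "v \<noteq> 0"
    using z by (simp add: v_def outer_mult_vector)
  moreover have "cinner x v = 0"
    using hermitian_cinner[of P x z] P x by (simp add: orth_proj_def v_def cinner_self)
  moreover have "P *v v = v"
    using P x by (simp add: orth_proj_def v_def matrix_vector_mult_diff_distrib vec.scale
        matrix_vector_mul_assoc)
  ultimately show ?thesis
    using that[of "(1 / norm v) *\<^sub>R v"] by (simp add: matrix_vector_mult_scaleR_complex)
qed

lemma two_le_rank_of_orthogonal_fixed:
  assumes herm: "hermitian P" and x: "x1 \<noteq> 0" "x2 \<noteq> 0" "cinner x1 x2 = 0"
    and fixed: "P *v x1 = x1" "P *v x2 = x2"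
  shows "2 \<le> rank P"
proof -
  have "vec.independent {vcnj x1}"
    using independent_insert_vcnj(1)[OF vec.independent_empty _ x(1)] by simp
  then have ind: "vec.independent {vcnj x2, vcnj x1}" and "vcnj x2 \<notin> {vcnj x1}"
    using independent_insert_vcnj[of "{vcnj x1}" x2] x(2,3) by auto
  then have "card {vcnj x2, vcnj x1} = 2"
    by simp
  moreover have "{vcnj x2, vcnj x1} \<subseteq> vec.span (rows P)"
    using vcnj_in_span_rows[OF herm] fixed by simp
  ultimately have "2 \<le> vec.dim (vec.span (rows P))"
    using vec.independent_card_le_dim[OF _ ind] by metis
  then show ?thesis
    by (simp add: row_rank_def_gen vec.dim_span)
qed

lemma rank_add_two_le_of_orthogonal_kernel:
  fixes P :: "complex^'n^'m"
  assumes q: "q1 \<noteq> 0" "q2 \<noteq> 0" "cinner q1 q2 = 0" and ker: "P *v q1 = 0" "P *v q2 = 0"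
  shows "rank P + 2 \<le> CARD('n)"
proof -
  obtain B where B: "B \<subseteq> rows P" "vec.independent B" "card B = vec.dim (rows P)"
    using vec.basis_exists[of "rows P"] by metis
  have B0: "bdot r q1 = 0" "bdot r q2 = 0" if "r \<in> B" for r
    using bdot_rows_eq_0 ker B(1) that by auto
  have ind2: "vec.independent (insert (vcnj q2) B)" "vcnj q2 \<notin> B"
    using independent_insert_vcnj[OF B(2) B0(2) q(2)] by auto
  have "bdot r q1 = 0" if "r \<in> insert (vcnj q2) B" for r
    using that B0(1) q(3) cinner_eq_0_commute by auto
  then have ind3: "vec.independent (insert (vcnj q1) (insert (vcnj q2) B))"
    and "vcnj q1 \<notin> insert (vcnj q2) B"
    using independent_insert_vcnj[OF ind2(1) _ q(1)] by auto
  moreover have "finite B"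
    using B(2) vec.finiteI_independent by blast
  ultimately have "card (insert (vcnj q1) (insert (vcnj q2) B)) = card B + 2"
    using ind2(2) by simp
  moreover have "card (insert (vcnj q1) (insert (vcnj q2) B)) \<le> CARD('n)"
    using vec.independent_card_le_dim[OF subset_UNIV ind3] by (simp add: vec_dim_card card_cart_basis)
  ultimately show ?thesis
    using B(3) by (simp add: row_rank_def_gen)
qed

lemma orth_proj_rank_one:
  assumes P: "orth_proj P" and rank: "rank P = 1"
  obtains x where "norm x = 1" "P = outer x x"
proof -
  have "P \<noteq> 0"
    using rank by (auto simp: row_rank_def_gen rows_def row_def)
  then obtain x1 where x1: "norm x1 = 1" "P *v x1 = x1"
    using orth_proj_fixed_unit[OF P] by blast
  have "P = outer x1 x1"
  proof (rule ccontr)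
    assume "P \<noteq> outer x1 x1"
    then obtain x2 where x2: "norm x2 = 1" "P *v x2 = x2" "cinner x1 x2 = 0"
      using orth_proj_fixed_orthogonal[OF P x1] by blast
    have "hermitian P" "x1 \<noteq> 0" "x2 \<noteq> 0"
      using P x1(1) x2(1) by (auto simp: orth_proj_def)
    then have "2 \<le> rank P"
      using two_le_rank_of_orthogonal_fixed x1(2) x2(2,3) by blast
    then show False
      using rank by simp
  qed
  then show ?thesis
    using that x1(1) by blast
qed

lemma orth_proj_rank_pred:
  fixes P :: "complex^'n^'n"
  assumes P: "orth_proj P" and rank: "rank P = CARD('n) - 1"
  obtains q where "norm q = 1" "P = mat 1 - outer q q"
proof -
  define Q where "Q = mat 1 - P"
  have Q: "orth_proj Q"
    unfolding Q_def by (rule orth_proj_complement[OF P])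
  have PQ: "P = mat 1 - Q" and Pv: "P *v z = z - Q *v z" for z
    by (simp_all add: Q_def matrix_vector_mult_diff_rdistrib)
  have n: "0 < CARD('n)"
    by (rule finite_UNIV_card_ge_0[OF finite_class.finite_UNIV])
  have "Q \<noteq> 0"
  proof
    assume "Q = 0"
    then have "rank P = CARD('n)"
      using rank_mat_1_complex by (simp add: PQ)
    then show False
      using rank n by linarith
  qed
  then obtain q1 where q1: "norm q1 = 1" "Q *v q1 = q1"
    using orth_proj_fixed_unit[OF Q] by blast
  have "Q = outer q1 q1"
  proof (rule ccontr)
    assume "Q \<noteq> outer q1 q1"
    then obtain q2 where q2: "norm q2 = 1" "Q *v q2 = q2" "cinner q1 q2 = 0"
      using orth_proj_fixed_orthogonal[OF Q q1] by blast
    have "q1 \<noteq> 0" "q2 \<noteq> 0"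
      using q1(1) q2(1) by auto
    moreover have "P *v q1 = 0" "P *v q2 = 0"
      using q1(2) q2(2) by (simp_all add: Pv)
    ultimately have "rank P + 2 \<le> CARD('n)"
      using rank_add_two_le_of_orthogonal_kernel q2(3) by blast
    then show False
      using rank n by linarith
  qed
  then show ?thesis
    using that q1(1) PQ by blast
qed

section \<open>The joint numerical range\<close>

definition joint_quad :: "('m \<Rightarrow> complex^'n^'n) \<Rightarrow> complex^'n \<Rightarrow> real^'m" where
  "joint_quad A x = (\<chi> j. Re (cinner x (A j *v x)))"

lemma higher_rank_nr_1_eq:
  assumes herm: "\<And>j. hermitian (A j)"
  shows "higher_rank_nr 1 A = joint_quad A ` sphere 0 1"
proof (intro set_eqI iffI)
  fix a assume "a \<in> higher_rank_nr 1 A"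
  then obtain P where P: "orth_proj P" "rank P = 1" "\<And>j. P ** A j ** P = a$j *\<^sub>R P"
    by (auto simp: higher_rank_nr_def)
  obtain x where x: "norm x = 1" "P = outer x x"
    using orth_proj_rank_one[OF P(1,2)] by blast
  have "P \<noteq> 0"
    using P(2) by (auto simp: row_rank_def_gen rows_def row_def)
  then have "a$j = Re (cinner x (A j *v x))" for j
    using P(3)[of j] outer_compress[OF herm, of x j] x(2) by auto
  then have "a = joint_quad A x"
    by (simp add: joint_quad_def vec_eq_iff)
  then show "a \<in> joint_quad A ` sphere 0 1"
    using x(1) by simp
next
  fix a assume "a \<in> joint_quad A ` sphere 0 1"
  then obtain x where x: "norm x = 1" "a = joint_quad A x"
    by auto
  then have "\<forall>j. outer x x ** A j ** outer x x = a $ j *\<^sub>R outer x x"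
    using outer_compress[OF herm] by (simp add: joint_quad_def)
  moreover have "rank (outer x x) = 1"
    using x(1) by (intro rank_outer) auto
  ultimately show "a \<in> higher_rank_nr 1 A"
    unfolding higher_rank_nr_def using orth_proj_outer[OF x(1)] by blast
qed

text \<open>The compression of \<open>B\<close> to \<open>q\<^sup>\<bottom>\<close> vanishes, i.e. \<open>(I - q q\<^sup>*) B (I - q q\<^sup>*) = 0\<close>.\<close>

definition compression_zero :: "complex^'n \<Rightarrow> complex^'n^'n \<Rightarrow> bool" where
  "compression_zero q B \<longleftrightarrow> (\<forall>y. cinner q y = 0 \<longrightarrow> B *v y = cinner q (B *v y) *s q)"

lemma higher_rank_nr_pred_zero:
  fixes A :: "'m::finite \<Rightarrow> complex^'n^'n"
  assumes "0 \<in> higher_rank_nr (CARD('n) - 1) A"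
  obtains q where "norm q = 1" "\<And>j. compression_zero q (A j)"
proof -
  obtain P where P: "orth_proj P" "rank P = CARD('n) - 1" "\<And>j. P ** A j ** P = 0"
    using assms by (auto simp: higher_rank_nr_def)
  obtain q where q: "norm q = 1" "P = mat 1 - outer q q"
    using orth_proj_rank_pred[OF P(1,2)] by blast
  have Pv: "P *v z = z - cinner q z *s q" for z
    by (simp add: q(2) matrix_vector_mult_diff_rdistrib outer_mult_vector)
  have "compression_zero q (A j)" for j
    unfolding compression_zero_def
  proof (intro allI impI)
    fix y assume "cinner q y = 0"
    then have "P *v y = y"
      by (simp add: Pv)
    moreover have "(P ** A j ** P) *v y = 0"
      using P(3) by simp
    ultimately have "P *v (A j *v y) = 0"
      by (simp add: matrix_vector_mul_assoc[symmetric])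
    then show "A j *v y = cinner q (A j *v y) *s q"
      by (simp add: Pv)
  qed
  then show ?thesis
    using that q(1) by blast
qed

section \<open>Coordinates on the joint numerical range\<close>

text \<open>If every \<open>A j\<close> maps \<open>q\<^sup>\<bottom>\<close> into \<open>\<complex>q\<close> and \<open>x = a q + y\<close> with \<open>y \<bottom> q\<close>, then
  \<open>cinner x (A j *v x) = |a|\<^sup>2 cinner q (A j *v q) + 2 Re (cinner q (A j *v (a\<^sup>* y)))\<close>;
  this is where \<open>param_coords\<close> and \<open>param_pairing\<close> come from.\<close>

definition param_coords :: "complex^'n \<Rightarrow> complex^'n \<Rightarrow> real \<times> (complex^'n)" where
  "param_coords q x = (cmod (cinner q x) ^ 2, cnj (cinner q x) *s (x - cinner q x *s q))"

definition param_space :: "complex^'n \<Rightarrow> (real \<times> (complex^'n)) set" where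
  "param_space q = {p. cinner q (snd p) = 0}"

definition param_pairing :: "complex^'n \<Rightarrow> real \<times> (complex^'n) \<Rightarrow> complex^'n^'n \<Rightarrow> real" where
  "param_pairing q p B = fst p * Re (cinner q (B *v q)) + 2 * Re (cinner q (B *v snd p))"

definition param_map :: "complex^'n \<Rightarrow> ('m \<Rightarrow> complex^'n^'n) \<Rightarrow> real \<times> (complex^'n) \<Rightarrow> real^'m" where
  "param_map q A p = (\<chi> j. param_pairing q p (A j))"

lemma subspace_param_space: "subspace (param_space q)"
  by (auto simp: subspace_def param_space_def)

lemma linear_param_map: "linear (param_map q A)"
  by (rule linearI) (simp_all add: param_map_def param_pairing_def vec_eq_iff
      matrix_vector_right_distrib matrix_vector_mult_scaleR_complex algebra_simps)

lemma linear_param_pairing: "linear (param_pairing q p)"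
  by (rule linearI) (simp_all add: param_pairing_def matrix_vector_mult_add_rdistrib
      scaleR_matrix_vector_mult_complex algebra_simps)

lemma mem_sphere_half_iff: "(t, w) \<in> sphere (1/2, 0) (1/2) \<longleftrightarrow> norm w ^ 2 = t * (1 - t)"
proof -
  have "(t, w) \<in> sphere (1/2, 0) (1/2) \<longleftrightarrow> dist (1/2, 0) (t, w) ^ 2 = (1/2) ^ 2"
    by (simp add: power2_eq_iff_nonneg)
  also have "dist (1/2, 0) (t, w) ^ 2 = (1/2 - t) ^ 2 + norm w ^ 2"
    by (simp add: dist_norm norm_Pair)
  also have "(1/2 - t) ^ 2 = (1/2) ^ 2 - t * (1 - t)"
    by (simp add: power2_eq_square algebra_simps)
  finally show ?thesis
    by linarith
qed

lemma dim_param_space: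
  fixes q :: "complex^'n"
  assumes q: "norm q = 1"
  shows "dim (param_space q) = 2 * CARD('n) - 1"
proof -
  define a b where "a = (0::real, q)" and "b = (0::real, \<i> *s q)"
  have qq: "cinner q q = 1"
    using q by (simp add: cinner_self)
  have inner_a: "inner a p = Re (cinner q (snd p))" and inner_b: "inner b p = Im (cinner q (snd p))"
    for p by (simp_all add: a_def b_def inner_prod_def inner_eq_Re_cinner)
  have D: "param_space q = {p \<in> UNIV. \<forall>x\<in>span {a, b}. orthogonal x p}"
  proof (intro set_eqI iffI)
    fix p assume "p \<in> param_space q"
    then have "orthogonal p a" "orthogonal p b"
      by (simp_all add: param_space_def orthogonal_def inner_commute inner_a inner_b)
    then show "p \<in> {p \<in> UNIV. \<forall>x\<in>span {a, b}. orthogonal x p}"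
      using orthogonal_to_span[of _ "{a, b}" p] by (auto simp: orthogonal_commute)
  next
    fix p assume "p \<in> {p \<in> UNIV. \<forall>x\<in>span {a, b}. orthogonal x p}"
    then have "inner a p = 0" "inner b p = 0"
      by (auto simp: orthogonal_def span_base)
    then show "p \<in> param_space q"
      by (simp add: param_space_def inner_a inner_b complex_eq_iff)
  qed
  have orth: "inner a a = 1" "inner b b = 1" "inner a b = 0"
    using inner_a[of a] inner_b[of b] inner_a[of b] by (simp_all add: a_def b_def qq)
  have "independent {a, b}"
  proof (rule pairwise_orthogonal_independent)
    show "pairwise orthogonal {a, b}"
      using orth by (simp add: pairwise_insert orthogonal_def inner_commute)
    show "0 \<notin> {a, b}"
      using orth by auto
  qed
  moreover have "a \<noteq> b"
    using orth by auto
  ultimately have "dim (span {a, b}) = 2"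
    by (simp add: dim_eq_card_independent)
  moreover have "dim {p \<in> UNIV. \<forall>x\<in>span {a, b}. orthogonal x p} + dim (span {a, b})
      = dim (UNIV :: (real \<times> (complex^'n)) set)"
    by (rule dim_subspace_orthogonal_to_vectors) auto
  ultimately show ?thesis
    unfolding D by simp
qed

lemma param_coords_mem:
  assumes q: "norm q = 1" and x: "norm x = 1"
  shows "param_coords q x \<in> param_space q \<inter> sphere (1/2, 0) (1/2)"
proof -
  define a y where "a = cinner q x" and "y = x - a *s q"
  have qy: "cinner q y = 0"
    using q by (simp add: y_def a_def cinner_self)
  have "1 = cmod a ^ 2 + norm y ^ 2"
    using norm_smult_add_orthogonal[OF q qy, of a] x by (simp add: y_def)
  then have ny: "norm y ^ 2 = 1 - cmod a ^ 2"
    by simp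
  show ?thesis
    using qy by (simp add: param_coords_def param_space_def mem_sphere_half_iff norm_smult
        power_mult_distrib ny del: mem_sphere flip: a_def y_def)
qed

lemma param_coords_surj:
  fixes q :: "complex^'n"
  assumes n: "2 \<le> CARD('n)" and q: "norm q = 1"
    and w: "cinner q w = 0" "norm w ^ 2 = t * (1 - t)"
  obtains x where "norm x = 1" "param_coords q x = (t, w)"
proof (cases "t = 0")
  case True
  obtain x where "norm x = 1" "cinner q x = 0"
    using exists_unit_orthogonal[OF n q] by blast
  moreover have "w = 0"
    using w(2) True by simp
  ultimately show ?thesis
    using True that by (simp add: param_coords_def)
next
  case False
  have "0 \<le> t * (1 - t)"
    using w(2) by (metis zero_le_power2)
  then have t: "0 < t"
    using False by (smt (verit) mult_neg_pos)
  define s where "s = sqrt t"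
  have s: "0 < s" "s * s = t"
    using t by (simp_all add: s_def)
  define x where "x = complex_of_real s *s q + complex_of_real (1 / s) *s w"
  have qx: "cinner q x = of_real s"
    using q w(1) by (simp add: x_def cinner_self)
  have "norm x ^ 2 = s ^ 2 + (1 / s) ^ 2 * norm w ^ 2"
    using norm_smult_add_orthogonal[OF q, of "complex_of_real (1 / s) *s w" "of_real s"] w(1) s(1)
    by (simp add: x_def norm_smult power_mult_distrib norm_divide power_divide)
  moreover have "(1 / s) ^ 2 * norm w ^ 2 = 1 - t"
    using w(2) s t by (simp add: power2_eq_square field_simps)
  moreover have "s ^ 2 = t"
    using s by (simp add: power2_eq_square)
  ultimately have "norm x ^ 2 = 1"
    by simp
  then have "norm x = 1"
    using norm_ge_zero[of x] by (auto simp: power2_eq_1_iff)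
  moreover have "param_coords q x = (t, w)"
    using s qx by (simp add: param_coords_def x_def norm_of_real power2_eq_square
        vector_smult_assoc flip: of_real_mult)
  ultimately show ?thesis
    by (rule that)
qed

lemma param_coords_image_sphere:
  fixes q :: "complex^'n"
  assumes n: "2 \<le> CARD('n)" and q: "norm q = 1"
  shows "param_coords q ` sphere 0 1 = param_space q \<inter> sphere (1/2, 0) (1/2)"
proof
  show "param_coords q ` sphere 0 1 \<subseteq> param_space q \<inter> sphere (1/2, 0) (1/2)"
    using param_coords_mem[OF q] by auto
  show "param_space q \<inter> sphere (1/2, 0) (1/2) \<subseteq> param_coords q ` sphere 0 1"
  proof clarify
    fix t w assume "(t, w) \<in> param_space q" "(t, w) \<in> sphere (1/2, 0) (1/2)"
    then obtain x where "norm x = 1" "param_coords q x = (t, w)"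
      using param_coords_surj[OF n q]
      by (auto simp: param_space_def mem_sphere_half_iff simp del: mem_sphere)
    then show "(t, w) \<in> param_coords q ` sphere 0 1"
      by force
  qed
qed

lemma joint_quad_eq_param_map:
  assumes herm: "\<And>j. hermitian (A j)" and q: "norm q = 1"
    and cz: "\<And>j. compression_zero q (A j)"
  shows "joint_quad A x = param_map q A (param_coords q x)"
proof -
  define a y where "a = cinner q x" and "y = x - a *s q"
  have qq: "cinner q q = 1"
    using q by (simp add: cinner_self)
  have qy: "cinner q y = 0"
    by (simp add: y_def a_def qq)
  then have yq: "cinner y q = 0"
    by (rule cinner_eq_0_commute)
  have x: "x = a *s q + y"
    by (simp add: y_def)
  have "Re (cinner x (A j *v x))
      = cmod a ^ 2 * Re (cinner q (A j *v q)) + 2 * Re (cinner q (A j *v (cnj a *s y)))" for j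
  proof -
    define b where "b = cinner q (A j *v y)"
    have Ay: "A j *v y = b *s q"
      using cz qy by (simp add: compression_zero_def b_def)
    have yAq: "cinner y (A j *v q) = cnj b"
      using hermitian_cinner[OF herm, of j y q] cnj_cinner[of q "A j *v y"] by (simp add: b_def)
    have "cinner x (A j *v x) = cnj a * a * cinner q (A j *v q) + (cnj a * b + cnj (cnj a * b))"
      unfolding x by (simp add: matrix_vector_right_distrib vec.scale Ay qq yq yAq algebra_simps)
    moreover have "cnj a * a = of_real (cmod a ^ 2)"
      by (metis complex_norm_square mult.commute)
    ultimately show ?thesis
      by (subst (asm) hermitian_cinner_real[OF herm]) (simp add: vec.scale b_def)
  qed
  then show ?thesis
    by (simp add: joint_quad_def param_map_def param_pairing_def param_coords_def vec_eq_iff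
        flip: a_def y_def)
qed

lemma joint_quad_image_sphere:
  fixes A :: "'m::finite \<Rightarrow> complex^'n^'n"
  assumes "\<And>j. hermitian (A j)" "norm q = 1" "\<And>j. compression_zero q (A j)" "2 \<le> CARD('n)"
  shows "joint_quad A ` sphere 0 1 = param_map q A ` (param_space q \<inter> sphere (1/2, 0) (1/2))"
proof -
  have "joint_quad A = param_map q A \<circ> param_coords q"
    using joint_quad_eq_param_map[of A, OF assms(1-3)] by (simp add: fun_eq_iff)
  then have "joint_quad A ` sphere 0 1 = param_map q A ` param_coords q ` sphere 0 1"
    by (simp add: image_comp)
  then show ?thesis
    using param_coords_image_sphere[OF assms(4,2)] by simp
qed

section \<open>Injectivity of the coordinate map when \<open>m = 2n - 1\<close>\<close>

definition param_operator :: "complex^'n \<Rightarrow> real \<times> (complex^'n) \<Rightarrow> complex^'n^'n" where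
  "param_operator q p = fst p *\<^sub>R outer q q + outer q (snd p) + outer (snd p) q"

lemma param_operator_mult_vector:
  "param_operator q p *v z = fst p *\<^sub>R (cinner q z *s q) + cinner (snd p) z *s q + cinner q z *s snd p"
  by (simp add: param_operator_def matrix_vector_mult_add_rdistrib scaleR_matrix_vector_mult_complex
      outer_mult_vector)

lemma linear_param_operator: "linear (param_operator q)"
  by (rule linearI)
     (simp_all add: param_operator_def outer_add_left outer_add_right outer_scaleR_left
       outer_scaleR_right scaleR_add_left scaleR_add_right)

lemma compression_zero_eq_param_operator:
  assumes herm: "hermitian B" and q: "norm q = 1" and cz: "compression_zero q B"
  shows "B = param_operator q (Re (cinner q (B *v q)), B *v q - cinner q (B *v q) *s q)"
    (is "B = param_operator q ?p")
proof -
  define c where "c = cinner q (B *v q)"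
  define p where "p = ?p"
  have p: "p = (Re c, B *v q - c *s q)"
    by (simp add: p_def c_def)
  have qq: "cinner q q = 1"
    using q by (simp add: cinner_self)
  have c: "c = of_real (Re c)"
    unfolding c_def by (rule hermitian_cinner_real[OF herm])
  then have cnj_c: "cnj c = c"
    by (metis complex_cnj_complex_of_real)
  have Bqq: "cinner (B *v q) q = c"
    using hermitian_cinner[OF herm, of q q] by (simp add: c_def)
  have "B *v z = param_operator q p *v z" for z
  proof -
    define a y where "a = cinner q z" and "y = z - a *s q"
    have qy: "cinner q y = 0"
      by (simp add: y_def a_def qq)
    have z: "z = a *s q + y"
      by (simp add: y_def)
    have "cinner q (B *v y) = cinner (B *v q) y"
      using hermitian_cinner[OF herm, of q y] by simp
    also have "\<dots> = cinner (B *v q) z - a * c"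
      by (simp add: y_def Bqq)
    finally have qBy: "cinner q (B *v y) = cinner (B *v q) z - a * c" .
    have "B *v y = cinner q (B *v y) *s q"
      using cz qy by (simp add: compression_zero_def)
    then have "B *v y = (cinner (B *v q) z - a * c) *s q"
      by (simp only: qBy)
    moreover have "B *v z = a *s (B *v q) + B *v y"
      by (simp add: z matrix_vector_right_distrib vec.scale)
    ultimately have "B *v z = a *s (B *v q) + (cinner (B *v q) z - a * c) *s q"
      by simp
    also have "\<dots> = Re c *\<^sub>R (a *s q) + (cinner (B *v q) z - cnj c * a) *s q + a *s (B *v q - c *s q)"
      by (simp only: scaleR_eq_of_real_smult c[symmetric] cnj_c) (simp add: vec_eq_iff algebra_simps)
    also have "\<dots> = param_operator q p *v z"
      by (simp add: param_operator_mult_vector p a_def)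
    finally show ?thesis .
  qed
  then show ?thesis
    unfolding matrix_eq p_def by blast
qed

lemma compression_zero_in_param_operator_image:
  assumes "hermitian B" "norm q = 1" "compression_zero q B"
  shows "B \<in> param_operator q ` param_space q"
proof -
  have "cinner q q = 1"
    using assms(2) by (simp add: cinner_self)
  then have "(Re (cinner q (B *v q)), B *v q - cinner q (B *v q) *s q) \<in> param_space q"
    by (simp add: param_space_def)
  then show ?thesis
    by (rule image_eqI[where f = "param_operator q", OF compression_zero_eq_param_operator[OF assms]])
qed

lemma param_pairing_param_operator_self:
  assumes "norm q = 1" "p \<in> param_space q"
  shows "param_pairing q p (param_operator q p) = fst p ^ 2 + 2 * norm (snd p) ^ 2"
  using assms cinner_eq_0_commute[of q "snd p"]
  by (simp add: param_pairing_def param_operator_mult_vector param_space_def cinner_self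
      power2_eq_square)

lemma inj_on_param_map:
  fixes A :: "'m::finite \<Rightarrow> complex^'n^'n"
  assumes herm: "\<And>j. hermitian (A j)" and q: "norm q = 1"
    and cz: "\<And>j. compression_zero q (A j)"
    and indep: "lin_indep_tuple A" and m: "CARD('m) = 2 * CARD('n) - 1"
  shows "inj_on (param_map q A) (param_space q)"
proof -
  let ?H = "param_operator q ` param_space q"
  have "dim ?H \<le> dim (param_space q)"
    by (rule dim_image_le[OF linear_param_operator])
  also have "\<dots> = card (range A)"
    using dim_param_space[OF q] m lin_indep_tuple_inj[OF indep] by (simp add: card_image)
  finally have span: "?H \<subseteq> span (range A)"
    using card_ge_dim_independent[of "range A" ?H] lin_indep_tuple_independent[OF indep]
      compression_zero_in_param_operator_image[OF herm q cz] by blast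
  have "d = 0" if d: "d \<in> param_space q" "param_map q A d = 0" for d
  proof -
    have vanish: "param_pairing q d (A j) = 0" for j
      using d(2) by (simp add: param_map_def vec_eq_iff)
    have "param_pairing q d (param_operator q d) = 0"
      by (rule linear_eq_0_on_span[OF linear_param_pairing, of "range A"])
         (use vanish span d(1) in auto)
    then have "fst d ^ 2 + 2 * norm (snd d) ^ 2 = 0"
      using param_pairing_param_operator_self[OF q d(1)] by simp
    then show ?thesis
      by (simp add: prod_eq_iff add_nonneg_eq_0_iff)
  qed
  then show ?thesis
    using linear_inj_on_iff_eq_0[OF linear_param_map subspace_param_space] by blast
qed

lemma param_sphere_center:
  shows "(1/2, 0) \<in> param_space q" "(1/2, 0) \<noteq> (0 :: real \<times> (complex^'n))"
    and "norm (1/2 :: real, 0 :: complex^'n) = 1/2"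
  by (simp_all add: param_space_def zero_prod_def norm_Pair)

lemma param_image_sphere_normal_form:
  fixes A :: "'m::finite \<Rightarrow> complex^'n^'n"
  assumes "\<And>j. hermitian (A j)" "norm q = 1" "\<And>j. compression_zero q (A j)"
    and "lin_indep_tuple A" and m: "CARD('m) = 2 * CARD('n) - 1"
  shows "\<exists>S::real^'m^'m. invertible S \<and>
    param_map q A ` (param_space q \<inter> sphere (1/2, 0) (1/2)) = {(axis j0 1 + u) v* S | u. norm u = 1}"
  using linear_image_sphere_normal_form[OF linear_param_map inj_on_param_map[OF assms]
      subspace_param_space _ param_sphere_center(1,2), of j0]
    dim_param_space[OF assms(2)] m param_sphere_center(3)
  by simp

lemma not_starlike_param_image_sphere:
  fixes A :: "'m::finite \<Rightarrow> complex^'n^'n"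
  assumes "\<And>j. hermitian (A j)" "norm q = 1" "\<And>j. compression_zero q (A j)"
    and "lin_indep_tuple A" and "CARD('m) = 2 * CARD('n) - 1"
  shows "\<not> starlike (param_map q A ` (param_space q \<inter> sphere (1/2, 0) (1/2)))"
  by (rule not_starlike_linear_image_sphere[OF linear_param_map inj_on_param_map[OF assms]
      subspace_param_space param_sphere_center(1)]) simp

lemma convex_param_image_sphere:
  fixes A :: "'m::finite \<Rightarrow> complex^'n^'n"
  assumes q: "norm q = 1" and m: "CARD('m) < 2 * CARD('n) - 1"
  shows "convex (param_map q A ` (param_space q \<inter> sphere (1/2, 0) (1/2)))"
proof -
  obtain k where "k \<in> param_space q" "k \<noteq> 0" "param_map q A k = 0"
    using linear_kernel_nontrivial_on_subspace[OF linear_param_map subspace_param_space]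
      dim_param_space[OF q] m
    by (metis DIM_cart DIM_real mult_1_right)
  then show ?thesis
    by (rule convex_linear_image_sphere[OF linear_param_map subspace_param_space])
qed

lemma zero_in_param_image_sphere: "0 \<in> param_map q A ` (param_space q \<inter> sphere (1/2, 0) (1/2))"
  using linear_0[OF linear_param_map] by (force simp: param_space_def)

theorem proposition3p5:
  fixes A :: "'m::finite \<Rightarrow> complex^'n^'n"
  assumes n2: "CARD('n) \<ge> 2"
    and herm: "\<And>j. hermitian (A j)"
    and indep: "lin_indep_tuple A"
    and zero_in: "0 \<in> higher_rank_nr (CARD('n) - 1) A"
  shows "(CARD('m) = 2 * CARD('n) - 1 \<longrightarrow>
            (\<forall>j0::'m. \<exists>S::real^'m^'m. invertible S \<and>
               higher_rank_nr 1 A = {(axis j0 1 + u) v* S | u. norm u = 1})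
            \<and> \<not> starlike (higher_rank_nr 1 A))
       \<and> (CARD('m) < 2 * CARD('n) - 1 \<longrightarrow> star_center (higher_rank_nr 1 A) 0)"
proof -
  obtain q where q: "norm q = 1" and cz: "\<And>j. compression_zero q (A j)"
    using higher_rank_nr_pred_zero[OF zero_in] by blast
  have "higher_rank_nr 1 A = param_map q A ` (param_space q \<inter> sphere (1/2, 0) (1/2))"
    using higher_rank_nr_1_eq[where A=A, OF herm] joint_quad_image_sphere[where A=A, OF herm q cz n2]
    by simp
  then show ?thesis
    using param_image_sphere_normal_form[OF herm q cz indep]
      not_starlike_param_image_sphere[OF herm q cz indep]
      convex_star_center[OF convex_param_image_sphere[where A=A, OF q] zero_in_param_image_sphere]
    by auto
qed

end
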